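(* Let $(\mathsf K,\mathsf D)$ be a differential ring, $n\ge3$, $L=\sum_{k=0}^n\binom nk a_k\mathsf D^{n-k}$ ($a_0=1$), $u\in\mathsf K$, and let $L^{\star_u}:=(\mathsf D+a_1-u)^n+\sum_{m=2}^n\binom nm I_m(L)(\mathsf D+a_1-u)^{n-m}$ (rewritten in normal form $\sum_k\binom nk a_k^{\star_u}\mathsf D^{n-k}$, so that its first coefficient is $a_1-u$). Let $\delta=\Delta_{a_1}$. Then $W_2(L^{\star_u})=W_2(L)$, $$W_3(L^{\star_u})=W_3(L)+\tfrac32[u,W_2(L)],$$ and, if $n\ge4$, $$W_4(L^{\star_u})=W_4(L)+2[u,I_3(L)]+\tfrac65\Bigl([u,[u,W_2(L)]]-[\delta(u),W_2(L)]-2[u,\delta(W_2(L))]\Bigr).$$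
   Context: $\mathsf K$: unital associative (possibly noncommutative) ring with derivation $\mathsf D$; Ore algebra $\mathsf K\langle\mathsf D\rangle$ with $\mathsf D a=a\mathsf D+\mathsf D(a)$; $[x,y]=xy-yx$. For a monic operator $M=\sum_k\binom nk b_k\mathsf D^{n-k}$: $I_k(M)$ are the unique elements with $M=(\mathsf D+b_1)^n+\sum_{k\ge2}\binom nk I_k(M)(\mathsf D+b_1)^{n-k}$; $\Delta_{b_1}(x)=\mathsf D(x)+[b_1,x]$; $W_2(M)=I_2(M)$, $W_3(M)=I_3(M)-\frac32\Delta_{b_1}(I_2(M))$, $W_4(M)=I_4(M)-2\Delta_{b_1}(I_3(M))+\frac65\Delta_{b_1}^2(I_2(M))-\frac{3(5n+7)}{5(n+1)}I_2(M)^2$. *)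

theory Defs
  imports "HOL-Computational_Algebra.Polynomial"
begin

(* Rings containing Q: every positive integer is invertible (needed for the
   rational scalars 3/2, 6/5, ... and for uniqueness of the invariants I_k). *)
class rat_ring = ring_1 +
  assumes of_nat_invertible: "n \<noteq> 0 \<Longrightarrow> \<exists>x. of_nat n * x = 1"

definition derivation :: "('a::ring \<Rightarrow> 'a) \<Rightarrow> bool" where
  "derivation D \<longleftrightarrow> (\<forall>x y. D (x + y) = D x + D y) \<and> (\<forall>x y. D (x * y) = D x * y + x * D y)"

definition comm :: "'a::ring \<Rightarrow> 'a \<Rightarrow> 'a" where
  "comm x y = x * y - y * x"

definition nat_inv :: "nat \<Rightarrow> 'a::ring_1" where
  "nat_inv m = (THE x. of_nat m * x = 1)"

definition qK :: "int \<Rightarrow> nat \<Rightarrow> 'a::ring_1" where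
  "qK p q = of_int p * nat_inv q"

(* Elements of the Ore algebra K<D> in normal form  sum_i c_i D^i ,
   represented as 'a poly (coeff P i = c_i).  Multiplication uses
   (a D^i)(b D^j) = sum_k (i choose k) a D^k(b) D^(i-k+j). *)
definition ore_mult :: "('a::ring_1 \<Rightarrow> 'a) \<Rightarrow> 'a poly \<Rightarrow> 'a poly \<Rightarrow> 'a poly" where
  "ore_mult D P Q = (\<Sum>i\<le>degree P. \<Sum>j\<le>degree Q. \<Sum>k\<le>i.
       monom (of_nat (i choose k) * coeff P i * (D ^^ k) (coeff Q j)) (i - k + j))"

definition opD :: "'a::ring_1 poly" where "opD = monom 1 1"

definition opC :: "'a::ring_1 \<Rightarrow> 'a poly" where "opC a = monom a 0"

definition ore_pow :: "('a::ring_1 \<Rightarrow> 'a) \<Rightarrow> 'a poly \<Rightarrow> nat \<Rightarrow> 'a poly" where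
  "ore_pow D P m = (ore_mult D P ^^ m) (opC 1)"

definition Irep :: "('a::ring_1 \<Rightarrow> 'a) \<Rightarrow> nat \<Rightarrow> 'a \<Rightarrow> (nat \<Rightarrow> 'a) \<Rightarrow> 'a poly" where
  "Irep D n b I = ore_pow D (opD + opC b) n +
     (\<Sum>k=2..n. ore_mult D (opC (of_nat (n choose k) * I k)) (ore_pow D (opD + opC b) (n - k)))"

definition first_coeff :: "nat \<Rightarrow> 'a::ring_1 poly \<Rightarrow> 'a" where
  "first_coeff n M = (THE b. of_nat n * b = coeff M (n - 1))"

definition Icoefs :: "('a::ring_1 \<Rightarrow> 'a) \<Rightarrow> nat \<Rightarrow> 'a poly \<Rightarrow> nat \<Rightarrow> 'a" where
  "Icoefs D n M = (THE I. Irep D n (first_coeff n M) I = M \<and> (\<forall>k. (k < 2 \<or> n < k) \<longrightarrow> I k = 0))"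

definition Iinv :: "('a::ring_1 \<Rightarrow> 'a) \<Rightarrow> nat \<Rightarrow> nat \<Rightarrow> 'a poly \<Rightarrow> 'a" where
  "Iinv D n k M = Icoefs D n M k"

definition Delta :: "('a::ring_1 \<Rightarrow> 'a) \<Rightarrow> 'a \<Rightarrow> 'a \<Rightarrow> 'a" where
  "Delta D b x = D x + comm b x"

definition W2 :: "('a::ring_1 \<Rightarrow> 'a) \<Rightarrow> nat \<Rightarrow> 'a poly \<Rightarrow> 'a" where
  "W2 D n M = Iinv D n 2 M"

definition W3 :: "('a::ring_1 \<Rightarrow> 'a) \<Rightarrow> nat \<Rightarrow> 'a poly \<Rightarrow> 'a" where
  "W3 D n M = Iinv D n 3 M - qK 3 2 * Delta D (first_coeff n M) (Iinv D n 2 M)"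

definition W4 :: "('a::ring_1 \<Rightarrow> 'a) \<Rightarrow> nat \<Rightarrow> 'a poly \<Rightarrow> 'a" where
  "W4 D n M = Iinv D n 4 M - 2 * Delta D (first_coeff n M) (Iinv D n 3 M)
     + qK 6 5 * Delta D (first_coeff n M) (Delta D (first_coeff n M) (Iinv D n 2 M))
     - qK (3 * (5 * int n + 7)) (5 * (n + 1)) * (Iinv D n 2 M * Iinv D n 2 M)"

definition Lop :: "nat \<Rightarrow> (nat \<Rightarrow> 'a::ring_1) \<Rightarrow> 'a poly" where
  "Lop n a = (\<Sum>k\<le>n. monom (of_nat (n choose k) * a k) (n - k))"

definition Lstar :: "('a::ring_1 \<Rightarrow> 'a) \<Rightarrow> nat \<Rightarrow> (nat \<Rightarrow> 'a) \<Rightarrow> 'a \<Rightarrow> 'a poly" where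
  "Lstar D n a u = Irep D n (a 1 - u) (\<lambda>k. Iinv D n k (Lop n a))"

end

theory Submission
  imports Defs
begin

(* By definition L^{star_u} = Irep D n (a_1 - u) I with I_k = I_k(L). A representation
   M = Irep D n b I is unique: (D + b)^m is monic of order m and the binomial coefficients are
   invertible, so comparing coefficients is triangular. Hence I_k(L^{star_u}) = I_k(L), and the
   W_k change only through the first coefficient, i.e. through Delta_{a_1 - u} = Delta_{a_1} - [u, _].
   Expanding Delta_{a_1 - u} and its square with the Leibniz rule for [u, _] gives the formulas. *)

lemma derivation_add: "derivation D \<Longrightarrow> D (x + y) = D x + D y"
  by (simp add: derivation_def)

lemma derivation_mult: "derivation D \<Longrightarrow> D (x * y) = D x * y + x * D y"
  by (simp add: derivation_def)

lemma derivation_0: "derivation D \<Longrightarrow> D 0 = 0"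
  using derivation_add[of D 0 0] by simp

lemma derivation_1: "derivation D \<Longrightarrow> D (1::'a::ring_1) = 0"
  using derivation_mult[of D "1::'a" 1] by simp

lemma derivation_diff: "derivation D \<Longrightarrow> D (x - y) = D x - D y"
  using derivation_add[of D "x - y" y] by (simp add: eq_diff_eq)

lemma of_nat_mult_left_cancel:
  assumes "N \<noteq> 0" and "of_nat N * x = (of_nat N * y :: 'a::rat_ring)"
  shows "x = y"
proof -
  obtain z where "of_nat N * z = (1::'a)"
    using of_nat_invertible[OF assms(1)] by blast
  then have z: "z * of_nat N = 1" by (simp add: mult_of_nat_commute)
  have "z * (of_nat N * x) = z * (of_nat N * y)" using assms(2) by simp
  then show ?thesis by (simp add: mult.assoc[symmetric] z)
qed

lemma degree_opD_plus_opC: "degree (opD + opC b :: 'a::ring_1 poly) = 1"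
  unfolding opD_def opC_def
  by (subst degree_add_eq_left) (auto simp: degree_monom_eq monom_0)

lemma coeff_opD: "coeff (opD :: 'a::ring_1 poly) i = (if i = 1 then 1 else 0)"
  by (simp add: opD_def coeff_monom)

lemma coeff_opC: "coeff (opC c) i = (if i = 0 then c else 0)"
  by (simp add: opC_def coeff_monom)

lemma coeff_ore_mult_opC: "coeff (ore_mult D (opC c) Q) m = c * coeff Q m"
proof -
  have "coeff (ore_mult D (opC c) Q) m = (\<Sum>j\<le>degree Q. if j = m then c * coeff Q j else 0)"
    unfolding ore_mult_def by (simp add: opC_def coeff_sum coeff_monom monom_0)
  then show ?thesis by (auto simp: coeff_eq_0)
qed

lemma coeff_ore_mult_opD_plus_opC:
  assumes "derivation D"
  shows "coeff (ore_mult D (opD + opC b) Q) m =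
     (if m = 0 then 0 else coeff Q (m - 1)) + b * coeff Q m + D (coeff Q m)"
proof -
  have "coeff (ore_mult D (opD + opC b) Q) m =
     (\<Sum>j\<le>degree Q. (if j = m then b * coeff Q j else 0) + (if Suc j = m then coeff Q j else 0)
        + (if j = m then D (coeff Q j) else 0))"
    unfolding ore_mult_def degree_opD_plus_opC
    by (simp add: coeff_sum coeff_monom coeff_opD coeff_opC atMost_Suc
        sum.distrib[symmetric] algebra_simps)
  also have "\<dots> = (if m \<le> degree Q then b * coeff Q m else 0)
        + (\<Sum>j\<le>degree Q. if Suc j = m then coeff Q j else 0)
        + (if m \<le> degree Q then D (coeff Q m) else 0)"
    by (simp add: sum.distrib)
  also have "(\<Sum>j\<le>degree Q. if Suc j = m then coeff Q j else 0) =
      (if m = 0 then 0 else coeff Q (m - 1))"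
    by (cases m) (auto simp: coeff_eq_0)
  finally show ?thesis
    using derivation_0[OF assms] by (auto simp: coeff_eq_0)
qed

lemma ore_pow_Suc: "ore_pow D P (Suc m) = ore_mult D P (ore_pow D P m)"
  by (simp add: ore_pow_def)

lemma ore_pow_0: "ore_pow D P 0 = opC 1"
  by (simp add: ore_pow_def)

lemma coeff_ore_pow_opD_plus_opC_above:
  assumes "derivation D" and "m < j"
  shows "coeff (ore_pow D (opD + opC b) m) j = 0"
  using assms(2)
proof (induction m arbitrary: j)
  case 0
  then show ?case by (simp add: ore_pow_0 opC_def coeff_monom)
next
  case (Suc m)
  then show ?case
    by (simp add: ore_pow_Suc coeff_ore_mult_opD_plus_opC[OF assms(1)] derivation_0[OF assms(1)])
qed

lemma coeff_ore_pow_opD_plus_opC_top: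
  assumes "derivation D"
  shows "coeff (ore_pow D (opD + opC b) m) m = 1"
proof (induction m)
  case 0
  then show ?case by (simp add: ore_pow_0 opC_def)
next
  case (Suc m)
  then show ?case
    by (simp add: ore_pow_Suc coeff_ore_mult_opD_plus_opC[OF assms]
        coeff_ore_pow_opD_plus_opC_above[OF assms] derivation_0[OF assms])
qed

lemma coeff_ore_pow_opD_plus_opC_subleading:
  assumes "derivation D"
  shows "coeff (ore_pow D (opD + opC b) (Suc m)) m = of_nat (Suc m) * b"
proof (induction m)
  case 0
  then show ?case
    by (simp add: ore_pow_Suc coeff_ore_mult_opD_plus_opC[OF assms] ore_pow_0 coeff_opC
        derivation_1[OF assms])
next
  case (Suc m)
  then show ?case
    by (simp add: ore_pow_Suc[of D _ "Suc m"] coeff_ore_mult_opD_plus_opC[OF assms]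
        coeff_ore_pow_opD_plus_opC_top[OF assms] derivation_1[OF assms] algebra_simps)
qed

lemma coeff_Irep:
  "coeff (Irep D n b I) j = coeff (ore_pow D (opD + opC b) n) j
     + (\<Sum>k=2..n. of_nat (n choose k) * I k * coeff (ore_pow D (opD + opC b) (n - k)) j)"
  unfolding Irep_def by (simp add: coeff_sum coeff_ore_mult_opC mult.assoc)

lemma first_coeff_eqI:
  assumes "n \<noteq> 0" and "coeff M (n - 1) = of_nat n * (b::'a::rat_ring)"
  shows "first_coeff n M = b"
  unfolding first_coeff_def
  using assms of_nat_mult_left_cancel[OF assms(1)] by (intro the_equality) auto

lemma first_coeff_Irep:
  assumes "derivation D" and "n \<ge> 1"
  shows "first_coeff n (Irep D n b I) = (b::'a::rat_ring)"
proof (rule first_coeff_eqI)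
  show "n \<noteq> 0" using assms(2) by simp
  have "(\<Sum>k=2..n. of_nat (n choose k) * I k * coeff (ore_pow D (opD + opC b) (n - k)) (n - 1)) = 0"
    using assms by (intro sum.neutral) (auto simp: coeff_ore_pow_opD_plus_opC_above)
  then show "coeff (Irep D n b I) (n - 1) = of_nat n * b"
    using coeff_ore_pow_opD_plus_opC_subleading[OF assms(1), where m = "n - 1"] assms(2)
    by (simp add: coeff_Irep)
qed

lemma first_coeff_Lop:
  assumes "n \<ge> 1"
  shows "first_coeff n (Lop n a) = (a 1::'a::rat_ring)"
proof (rule first_coeff_eqI)
  show "n \<noteq> 0" using assms by simp
  have "coeff (Lop n a) (n - 1) = (\<Sum>k\<le>n. if k = 1 then of_nat (n choose k) * a k else 0)"
    unfolding Lop_def coeff_sum coeff_monom using assms by (intro sum.cong) auto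
  then show "coeff (Lop n a) (n - 1) = of_nat n * a 1" using assms by simp
qed

lemma Irep_eq_imp_eq_step:
  assumes D: "derivation D" and eq: "Irep D n b I = Irep D n b J"
    and k: "2 \<le> k" "k \<le> n" and below: "\<And>k'. 2 \<le> k' \<Longrightarrow> k' < k \<Longrightarrow> I k' = J k'"
  shows "I k = (J k :: 'a::rat_ring)"
proof -
  let ?c = "\<lambda>k'. coeff (ore_pow D (opD + opC b) (n - k')) (n - k)"
  have term_diff: "of_nat (n choose k') * I k' * ?c k' - of_nat (n choose k') * J k' * ?c k'
      = (if k' = k then of_nat (n choose k) * (I k - J k) else 0)" if "k' \<in> {2..n}" for k'
  proof -
    consider "k' < k" | "k' = k" | "k < k'" by linarith
    then show ?thesis
    proof cases
      case 1
      then show ?thesis using below that by auto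
    next
      case 2
      then show ?thesis by (simp add: coeff_ore_pow_opD_plus_opC_top[OF D] algebra_simps)
    next
      case 3
      then show ?thesis using that k by (simp add: coeff_ore_pow_opD_plus_opC_above[OF D])
    qed
  qed
  have "0 = (\<Sum>k'=2..n. of_nat (n choose k') * I k' * ?c k' - of_nat (n choose k') * J k' * ?c k')"
    using arg_cong[OF eq, of "\<lambda>M. coeff M (n - k)"] by (simp add: coeff_Irep sum_subtractf)
  also have "\<dots> = of_nat (n choose k) * (I k - J k)"
    using k by (simp add: term_diff)
  finally have "of_nat (n choose k) * (I k - J k) = of_nat (n choose k) * 0" by simp
  from of_nat_mult_left_cancel[OF _ this] k show ?thesis by simp
qed

lemma Irep_inj:
  assumes "derivation D" and "Irep D n b I = Irep D n b J"
    and "\<And>k. k < 2 \<or> n < k \<Longrightarrow> I k = 0" and "\<And>k. k < 2 \<or> n < k \<Longrightarrow> J k = (0::'a::rat_ring)"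
  shows "I = J"
proof
  fix k
  show "I k = J k"
  proof (induction k rule: less_induct)
    case (less k)
    then show ?case
      using assms Irep_eq_imp_eq_step[OF assms(1,2), of k] by (cases "k < 2 \<or> n < k") auto
  qed
qed

lemma Irep_restrict: "Irep D n b I = Irep D n b (\<lambda>k. if 2 \<le> k \<and> k \<le> n then I k else 0)"
  unfolding Irep_def by (intro arg_cong2[where f="(+)"] refl sum.cong) auto

lemma Iinv_Irep:
  assumes "derivation D" and "2 \<le> k" and "k \<le> n"
  shows "Iinv D n k (Irep D n b I) = (I k :: 'a::rat_ring)"
proof -
  let ?J = "\<lambda>k. if 2 \<le> k \<and> k \<le> n then I k else 0"
  have "n \<ge> 1" using assms(2,3) by simp
  have "Icoefs D n (Irep D n b I) = ?J"
    unfolding Icoefs_def first_coeff_Irep[OF assms(1) \<open>n \<ge> 1\<close>]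
  proof (intro the_equality)
    show "Irep D n b ?J = Irep D n b I \<and> (\<forall>k. k < 2 \<or> n < k \<longrightarrow> ?J k = 0)"
      using Irep_restrict[of D n b I] by auto
  next
    fix J assume "Irep D n b J = Irep D n b I \<and> (\<forall>k. k < 2 \<or> n < k \<longrightarrow> J k = 0)"
    then show "J = ?J"
      using Irep_restrict[of D n b I] by (intro Irep_inj[OF assms(1), of n b]) auto
  qed
  then show ?thesis using assms(2,3) by (simp add: Iinv_def)
qed

lemma first_coeff_Lstar:
  assumes "derivation D" and "n \<ge> 1"
  shows "first_coeff n (Lstar D n a u) = (a 1 - u :: 'a::rat_ring)"
  unfolding Lstar_def using assms by (rule first_coeff_Irep)

lemma Iinv_Lstar:
  assumes "derivation D" and "2 \<le> k" and "k \<le> n"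
  shows "Iinv D n k (Lstar D n a u) = (Iinv D n k (Lop n a) :: 'a::rat_ring)"
  unfolding Lstar_def using assms by (rule Iinv_Irep)

lemma comm_diff_right: "comm u (x - y) = comm u x - comm u y"
  unfolding comm_def by (simp add: algebra_simps)

lemma Delta_diff_left: "Delta D (b - u) x = Delta D b x - comm u x"
  unfolding Delta_def comm_def by (simp add: algebra_simps)

lemma Delta_diff:
  assumes "derivation D"
  shows "Delta D b (x - y) = Delta D b x - Delta D b y"
  unfolding Delta_def comm_def by (simp add: derivation_diff[OF assms] algebra_simps)

lemma Delta_comm:
  assumes "derivation D"
  shows "Delta D b (comm u x) = comm (Delta D b u) x + comm u (Delta D b x)"
  unfolding Delta_def comm_def
  by (simp add: derivation_diff[OF assms] derivation_mult[OF assms] algebra_simps)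

lemma Delta_diff_left_twice:
  assumes "derivation D"
  shows "Delta D (b - u) (Delta D (b - u) x) =
    Delta D b (Delta D b x) - comm (Delta D b u) x - 2 * comm u (Delta D b x) + comm u (comm u x)"
  by (simp add: Delta_diff_left Delta_diff[OF assms] Delta_comm[OF assms] comm_diff_right
      mult_2 algebra_simps)

theorem mainTheorem12:
  fixes D :: "'a::rat_ring \<Rightarrow> 'a" and n :: nat and a :: "nat \<Rightarrow> 'a" and u :: 'a
  assumes "derivation D" and "n \<ge> 3" and "a 0 = 1"
  shows "W2 D n (Lstar D n a u) = W2 D n (Lop n a)
    \<and> W3 D n (Lstar D n a u) = W3 D n (Lop n a) + qK 3 2 * comm u (W2 D n (Lop n a))
    \<and> (n \<ge> 4 \<longrightarrow>
        W4 D n (Lstar D n a u) = W4 D n (Lop n a) + 2 * comm u (Iinv D n 3 (Lop n a))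
          + qK 6 5 * (comm u (comm u (W2 D n (Lop n a)))
                      - comm (Delta D (a 1) u) (W2 D n (Lop n a))
                      - 2 * comm u (Delta D (a 1) (W2 D n (Lop n a)))))"
proof -
  have first: "first_coeff n (Lstar D n a u) = a 1 - u" "first_coeff n (Lop n a) = a 1"
    using assms(1,2) by (simp_all add: first_coeff_Lstar first_coeff_Lop)
  have I2: "Iinv D n 2 (Lstar D n a u) = Iinv D n 2 (Lop n a)"
    and I3: "Iinv D n 3 (Lstar D n a u) = Iinv D n 3 (Lop n a)"
    using assms(1,2) by (simp_all add: Iinv_Lstar)
  show ?thesis
  proof (intro conjI impI)
    show "W2 D n (Lstar D n a u) = W2 D n (Lop n a)"
      by (simp add: W2_def I2)
    show "W3 D n (Lstar D n a u) = W3 D n (Lop n a) + qK 3 2 * comm u (W2 D n (Lop n a))"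
      by (simp add: W3_def W2_def first I2 I3 Delta_diff_left algebra_simps)
  next
    assume "n \<ge> 4"
    then have I4: "Iinv D n 4 (Lstar D n a u) = Iinv D n 4 (Lop n a)"
      using assms(1) by (simp add: Iinv_Lstar)
    show "W4 D n (Lstar D n a u) = W4 D n (Lop n a) + 2 * comm u (Iinv D n 3 (Lop n a))
          + qK 6 5 * (comm u (comm u (W2 D n (Lop n a)))
                      - comm (Delta D (a 1) u) (W2 D n (Lop n a))
                      - 2 * comm u (Delta D (a 1) (W2 D n (Lop n a))))"
      unfolding W4_def W2_def first I2 I3 I4 Delta_diff_left_twice[OF assms(1)]
      by (simp add: Delta_diff_left algebra_simps)
  qed
qed

end
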